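(* Let $\rho$ be a representation of $D^{2,2,2}$ and let $\{i,j,k\}=\{1,2,3\}$. Then: 1. $\varphi_i(\Phi^+\rho(x_i))=0$; 2. $\varphi_i(\Phi^+\rho(x_j))=\varphi_k(\Phi^+\rho(x_j))=\rho(y_iy_k)$; 3. $\varphi_i(\Phi^+\rho(y_i))=\rho(x_i(y_j+y_k))$; 4. $\varphi_i(\Phi^+\rho(y_j))=\rho(y_i(x_j+y_k))$; 5. $\varphi_i(\Phi^+\rho(I))=\rho(y_i(y_j+y_k))$; 6. $\varphi_i(\Phi^+\rho(y_jy_k))=\rho(y_i(x_j+x_k))$.
   Context: $D^{2,2,2}$ is the modular lattice generated by $x_1,y_1,x_2,y_2,x_3,y_3$ subject only to $x_i\subseteq y_i$ ($i=1,2,3$), with a greatest element $I$ adjoined. Meet is written $ab$, join $a+b$. A representation $\rho$ of $D^{2,2,2}$ in a finite-dimensional vector space $X_0$ is a lattice morphism from $D^{2,2,2}$ to the subspace lattice of $X_0$, with $\rho(I)=X_0$. Write $X_i=\rho(x_i)\subseteq Y_i=\rho(y_i)$. Put $R=Y_1\oplus Y_2\oplus Y_3$ and $X^1_0=\{(\eta_1,\eta_2,\eta_3)\in R:\sum\eta_i=0\}$. Let $G'_i\subseteq R$ be the triples whose $i$-th coordinate lies in $X_i$, and let $H'_i\subseteq R$ be the triples whose $i$-th coordinate is $0$. $\Phi^+\rho$ is the representation of $D^{2,2,2}$ in $X^1_0$ with $\Phi^+\rho(y_i)=G'_i\cap X^1_0$, $\Phi^+\rho(x_i)=H'_i\cap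 X^1_0$, $\Phi^+\rho(I)=X^1_0$. The elementary map $\varphi_i:X^1_0\to X_0$ is $(\eta_1,\eta_2,\eta_3)\mapsto\eta_i$; $\varphi_i(S)$ denotes the image of a subspace $S$. *)

theory Defs
  imports Complex_Main
begin

definition ssum :: "'v::ab_group_add set \<Rightarrow> 'v set \<Rightarrow> 'v set" where
  "ssum A B = {a + b | a b. a \<in> A \<and> b \<in> B}"

text \<open>A representation of D^{2,2,2} in the finite-dimensional space X0 (over the field of
  scalars of scale), given by the images X i = rho(x_i), Y i = rho(y_i), i = 1,2,3.
  Since D^{2,2,2} is generated by the x_i, y_i subject only to x_i below y_i (plus the
  adjoined top I with rho(I) = X0), such a lattice morphism is exactly such a choice of subspaces;
  its value on meets/joins of generators is intersection/sum of subspaces.\<close>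
definition rep222 :: "('k::field \<Rightarrow> 'v::ab_group_add \<Rightarrow> 'v) \<Rightarrow> 'v set \<Rightarrow> (nat \<Rightarrow> 'v set) \<Rightarrow> (nat \<Rightarrow> 'v set) \<Rightarrow> bool" where
  "rep222 scale X0 X Y \<longleftrightarrow>
     vector_space scale \<and> module.subspace scale X0 \<and>
     (\<exists>B. finite B \<and> module.span scale B = X0) \<and>
     (\<forall>i\<in>{1,2,3}. module.subspace scale (X i) \<and> module.subspace scale (Y i) \<and>
                    X i \<subseteq> Y i \<and> Y i \<subseteq> X0)"

text \<open>R = Y1 (+) Y2 (+) Y3 is modelled as functions eta :: nat => 'v with eta i in Y i for
  i in {1,2,3} and eta i = 0 otherwise; X^1_0 is the subspace where eta 1 + eta 2 + eta 3 = 0.\<close>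
definition R3 :: "(nat \<Rightarrow> 'v::ab_group_add set) \<Rightarrow> (nat \<Rightarrow> 'v) set" where
  "R3 Y = {\<eta>. (\<forall>i\<in>{1,2,3}. \<eta> i \<in> Y i) \<and> (\<forall>i. i \<notin> {1,2,3} \<longrightarrow> \<eta> i = 0)}"

definition X10 :: "(nat \<Rightarrow> 'v::ab_group_add set) \<Rightarrow> (nat \<Rightarrow> 'v) set" where
  "X10 Y = {\<eta> \<in> R3 Y. \<eta> 1 + \<eta> 2 + \<eta> 3 = 0}"

definition Gp :: "(nat \<Rightarrow> 'v::ab_group_add set) \<Rightarrow> (nat \<Rightarrow> 'v set) \<Rightarrow> nat \<Rightarrow> (nat \<Rightarrow> 'v) set" where
  "Gp X Y i = {\<eta> \<in> R3 Y. \<eta> i \<in> X i}"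

definition Hp :: "(nat \<Rightarrow> 'v::ab_group_add set) \<Rightarrow> nat \<Rightarrow> (nat \<Rightarrow> 'v) set" where
  "Hp Y i = {\<eta> \<in> R3 Y. \<eta> i = 0}"

definition PhiY :: "(nat \<Rightarrow> 'v::ab_group_add set) \<Rightarrow> (nat \<Rightarrow> 'v set) \<Rightarrow> nat \<Rightarrow> (nat \<Rightarrow> 'v) set" where
  "PhiY X Y i = Gp X Y i \<inter> X10 Y"

definition PhiX :: "(nat \<Rightarrow> 'v::ab_group_add set) \<Rightarrow> nat \<Rightarrow> (nat \<Rightarrow> 'v) set" where
  "PhiX Y i = Hp Y i \<inter> X10 Y"

definition PhiI :: "(nat \<Rightarrow> 'v::ab_group_add set) \<Rightarrow> (nat \<Rightarrow> 'v) set" where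
  "PhiI Y = X10 Y"

definition phi :: "nat \<Rightarrow> (nat \<Rightarrow> 'v) set \<Rightarrow> 'v set" where
  "phi i S = (\<lambda>\<eta>. \<eta> i) ` S"

end

theory Submission
  imports Defs
begin

text \<open>Once \<open>{i, j, k} = {1, 2, 3}\<close>, an element of \<open>X\<^sup>1\<^sub>0\<close> is a triple
  \<open>(\<eta>\<^sub>i, \<eta>\<^sub>j, \<eta>\<^sub>k)\<close> with \<open>\<eta>\<^sub>n \<in> Y\<^sub>n\<close> and \<open>\<eta>\<^sub>i = (-\<eta>\<^sub>j) + (-\<eta>\<^sub>k)\<close>.
  Hence if the triples are cut out by coordinatewise conditions \<open>\<eta>\<^sub>i \<in> C\<close>,
  \<open>\<eta>\<^sub>j \<in> A \<subseteq> Y\<^sub>j\<close>, \<open>\<eta>\<^sub>k \<in> B \<subseteq> Y\<^sub>k\<close> with \<open>A\<close>, \<open>B\<close> symmetric, the \<open>i\<close>-th coordinate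
  ranges exactly over \<open>Y\<^sub>i \<inter> C \<inter> (A + B)\<close>: every \<open>a = b + c\<close> there is the first
  coordinate of \<open>(a, -b, -c)\<close>. Each of the six identities is an instance, with
  \<open>A, B, C\<close> taken among \<open>0\<close>, \<open>X\<^sub>n\<close>, \<open>Y\<^sub>n\<close> and the whole space.\<close>

lemma distinct_if_insert3_eq:
  assumes "{i, j, k} = {1::nat, 2, 3}"
  shows "i \<noteq> j" "i \<noteq> k" "j \<noteq> k"
proof -
  have "card {i, j, k} = 3" using assms by simp
  then show "i \<noteq> j" "i \<noteq> k" "j \<noteq> k" by (auto simp: card_insert_if split: if_splits)
qed

lemma sum_123_eq_permuted:
  fixes f :: "nat \<Rightarrow> 'v::ab_group_add"
  assumes "{i, j, k} = {1, 2, 3}"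
  shows "f 1 + f 2 + f 3 = f i + f j + f k"
proof -
  note distinct = distinct_if_insert3_eq[OF assms]
  have "f 1 + f 2 + f 3 = sum f {1, 2, 3}" by (simp add: ac_simps)
  also have "\<dots> = sum f {i, j, k}" using assms by simp
  also have "\<dots> = f i + f j + f k" using distinct by (simp add: ac_simps)
  finally show ?thesis .
qed

lemma X10_iff:
  assumes "{i, j, k} = {1, 2, 3}"
  shows "\<eta> \<in> X10 Y \<longleftrightarrow>
    \<eta> i \<in> Y i \<and> \<eta> j \<in> Y j \<and> \<eta> k \<in> Y k \<and> \<eta> i + \<eta> j + \<eta> k = 0 \<and>
    (\<forall>n. n \<notin> {i, j, k} \<longrightarrow> \<eta> n = 0)"
  using sum_123_eq_permuted[OF assms, of \<eta>] unfolding X10_def R3_def assms[symmetric] by auto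

lemma X10_coords_mem:
  assumes "{i, j, k} = {1, 2, 3}" and "\<eta> \<in> X10 Y"
  shows "\<eta> i \<in> Y i" "\<eta> j \<in> Y j" "\<eta> k \<in> Y k"
  using assms(2) unfolding X10_iff[OF assms(1)] by simp_all

definition triple :: "nat \<Rightarrow> nat \<Rightarrow> nat \<Rightarrow> 'v::zero \<Rightarrow> 'v \<Rightarrow> 'v \<Rightarrow> nat \<Rightarrow> 'v" where
  "triple i j k a b c = (\<lambda>n. if n = i then a else if n = j then b else if n = k then c else 0)"

lemma triple_apply:
  assumes "{i, j, k} = {1, 2, 3}"
  shows "triple i j k a b c i = a" "triple i j k a b c j = b" "triple i j k a b c k = c"
  using distinct_if_insert3_eq[OF assms] by (simp_all add: triple_def)

lemma triple_in_X10:
  assumes "{i, j, k} = {1, 2, 3}"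
    and "a \<in> Y i" "b \<in> Y j" "c \<in> Y k" "a + b + c = 0"
  shows "triple i j k a b c \<in> X10 Y"
  using assms(2-) unfolding X10_iff[OF assms(1)] triple_apply[OF assms(1)]
  by (simp add: triple_def)

lemma ssumE:
  assumes "a \<in> ssum A B"
  obtains b c where "b \<in> A" "c \<in> B" "a = b + c"
  using assms unfolding ssum_def by blast

lemma ssumI: "a = b + c \<Longrightarrow> b \<in> A \<Longrightarrow> c \<in> B \<Longrightarrow> a \<in> ssum A B"
  unfolding ssum_def by blast

lemma zero_in_ssum: "0 \<in> A \<Longrightarrow> 0 \<in> B \<Longrightarrow> (0::'v::ab_group_add) \<in> ssum A B"
  by (rule ssumI[of 0 0 0]) simp_all

lemma ssum_zero_left: "ssum {0} B = B"
  unfolding ssum_def by auto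

lemma phi_X10_restrict:
  fixes Y :: "nat \<Rightarrow> 'v::ab_group_add set"
  assumes ijk: "{i, j, k} = {1, 2, 3}"
    and A: "A \<subseteq> Y j" "uminus ` A \<subseteq> A"
    and B: "B \<subseteq> Y k" "uminus ` B \<subseteq> B"
  shows "phi i {\<eta> \<in> X10 Y. \<eta> i \<in> C \<and> \<eta> j \<in> A \<and> \<eta> k \<in> B} = Y i \<inter> C \<inter> ssum A B"
    (is "phi i ?S = _")
proof (intro equalityI subsetI)
  fix a assume "a \<in> phi i ?S"
  then obtain \<eta> where \<eta>: "\<eta> \<in> X10 Y" "\<eta> i \<in> C" "\<eta> j \<in> A" "\<eta> k \<in> B" and a: "a = \<eta> i"
    unfolding phi_def by blast
  have "\<eta> i \<in> Y i" "\<eta> i + \<eta> j + \<eta> k = 0" using \<eta>(1) unfolding X10_iff[OF ijk] by auto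
  then have "\<eta> i = (- \<eta> j) + (- \<eta> k)" by (simp add: algebra_simps eq_neg_iff_add_eq_0)
  moreover have "(- \<eta> j) + (- \<eta> k) \<in> ssum A B"
    using A(2) B(2) \<eta>(3,4) by (intro ssumI[OF refl]) auto
  ultimately show "a \<in> Y i \<inter> C \<inter> ssum A B" using \<open>\<eta> i \<in> Y i\<close> \<eta>(2) a by simp
next
  fix a assume a: "a \<in> Y i \<inter> C \<inter> ssum A B"
  then obtain b c where bc: "b \<in> A" "c \<in> B" "a = b + c" by (blast elim: ssumE)
  let ?\<eta> = "triple i j k a (- b) (- c)"
  have "- b \<in> A" "- c \<in> B" using bc A(2) B(2) by auto
  then have "?\<eta> \<in> X10 Y" using a bc A(1) B(1) by (intro triple_in_X10[OF ijk]) auto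
  then have "?\<eta> \<in> ?S" using a \<open>- b \<in> A\<close> \<open>- c \<in> B\<close> by (simp add: triple_apply[OF ijk])
  then show "a \<in> phi i ?S"
    unfolding phi_def by (rule image_eqI[rotated]) (simp add: triple_apply[OF ijk])
qed

lemma PhiX_eq: "PhiX Y n = {\<eta> \<in> X10 Y. \<eta> n = 0}"
  by (auto simp: PhiX_def Hp_def X10_def)

lemma PhiY_eq: "PhiY X Y n = {\<eta> \<in> X10 Y. \<eta> n \<in> X n}"
  by (auto simp: PhiY_def Gp_def X10_def)

context
  fixes X Y :: "nat \<Rightarrow> 'v::ab_group_add set" and i j k :: nat
  assumes ijk: "{i, j, k} = {1, 2, 3}"
begin

lemma phi_PhiX_self:
  assumes "0 \<in> Y i" "0 \<in> Y j" "0 \<in> Y k" "uminus ` Y j \<subseteq> Y j" "uminus ` Y k \<subseteq> Y k"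
  shows "phi i (PhiX Y i) = {0}"
proof -
  have "phi i (PhiX Y i) = phi i {\<eta> \<in> X10 Y. \<eta> i \<in> {0} \<and> \<eta> j \<in> Y j \<and> \<eta> k \<in> Y k}"
    using X10_coords_mem[OF ijk] by (intro arg_cong[where f = "phi i"]) (auto simp: PhiX_eq)
  also have "\<dots> = Y i \<inter> {0} \<inter> ssum (Y j) (Y k)"
    using assms by (intro phi_X10_restrict[OF ijk]) auto
  finally show ?thesis using assms(1-3) zero_in_ssum by blast
qed

lemma phi_PhiX_other:
  assumes "0 \<in> Y j" "uminus ` Y k \<subseteq> Y k"
  shows "phi i (PhiX Y j) = Y i \<inter> Y k"
proof -
  have "phi i (PhiX Y j) = phi i {\<eta> \<in> X10 Y. \<eta> i \<in> UNIV \<and> \<eta> j \<in> {0} \<and> \<eta> k \<in> Y k}"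
    using X10_coords_mem[OF ijk] by (intro arg_cong[where f = "phi i"]) (auto simp: PhiX_eq)
  also have "\<dots> = Y i \<inter> UNIV \<inter> ssum {0} (Y k)"
    using assms by (intro phi_X10_restrict[OF ijk]) auto
  finally show ?thesis by (simp add: ssum_zero_left)
qed

lemma phi_PhiY_self:
  assumes "X i \<subseteq> Y i" "uminus ` Y j \<subseteq> Y j" "uminus ` Y k \<subseteq> Y k"
  shows "phi i (PhiY X Y i) = X i \<inter> ssum (Y j) (Y k)"
proof -
  have "phi i (PhiY X Y i) = phi i {\<eta> \<in> X10 Y. \<eta> i \<in> X i \<and> \<eta> j \<in> Y j \<and> \<eta> k \<in> Y k}"
    using X10_coords_mem[OF ijk] by (intro arg_cong[where f = "phi i"]) (auto simp: PhiY_eq)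
  also have "\<dots> = Y i \<inter> X i \<inter> ssum (Y j) (Y k)"
    using assms by (intro phi_X10_restrict[OF ijk]) auto
  finally show ?thesis using assms(1) by blast
qed

lemma phi_PhiY_other:
  assumes "X j \<subseteq> Y j" "uminus ` X j \<subseteq> X j" "uminus ` Y k \<subseteq> Y k"
  shows "phi i (PhiY X Y j) = Y i \<inter> ssum (X j) (Y k)"
proof -
  have "phi i (PhiY X Y j) = phi i {\<eta> \<in> X10 Y. \<eta> i \<in> UNIV \<and> \<eta> j \<in> X j \<and> \<eta> k \<in> Y k}"
    using X10_coords_mem[OF ijk] by (intro arg_cong[where f = "phi i"]) (auto simp: PhiY_eq)
  also have "\<dots> = Y i \<inter> UNIV \<inter> ssum (X j) (Y k)"
    using assms by (intro phi_X10_restrict[OF ijk]) auto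
  finally show ?thesis by simp
qed

lemma phi_PhiI:
  assumes "uminus ` Y j \<subseteq> Y j" "uminus ` Y k \<subseteq> Y k"
  shows "phi i (PhiI Y) = Y i \<inter> ssum (Y j) (Y k)"
proof -
  have "phi i (PhiI Y) = phi i {\<eta> \<in> X10 Y. \<eta> i \<in> UNIV \<and> \<eta> j \<in> Y j \<and> \<eta> k \<in> Y k}"
    using X10_coords_mem[OF ijk] by (intro arg_cong[where f = "phi i"]) (auto simp: PhiI_def)
  also have "\<dots> = Y i \<inter> UNIV \<inter> ssum (Y j) (Y k)"
    using assms by (intro phi_X10_restrict[OF ijk]) auto
  finally show ?thesis by simp
qed

lemma phi_PhiY_inter:
  assumes "X j \<subseteq> Y j" "uminus ` X j \<subseteq> X j" "X k \<subseteq> Y k" "uminus ` X k \<subseteq> X k"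
  shows "phi i (PhiY X Y j \<inter> PhiY X Y k) = Y i \<inter> ssum (X j) (X k)"
proof -
  have "phi i (PhiY X Y j \<inter> PhiY X Y k) =
      phi i {\<eta> \<in> X10 Y. \<eta> i \<in> UNIV \<and> \<eta> j \<in> X j \<and> \<eta> k \<in> X k}"
    using X10_coords_mem[OF ijk] by (intro arg_cong[where f = "phi i"]) (auto simp: PhiY_eq)
  also have "\<dots> = Y i \<inter> UNIV \<inter> ssum (X j) (X k)"
    using assms by (intro phi_X10_restrict[OF ijk]) auto
  finally show ?thesis by simp
qed

end

lemma rep222_subspace_facts:
  assumes "rep222 scale X0 X Y" "n \<in> {1, 2, 3}"
  shows "X n \<subseteq> Y n" "0 \<in> Y n" "uminus ` X n \<subseteq> X n" "uminus ` Y n \<subseteq> Y n"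
proof -
  interpret vector_space scale using assms(1) by (simp add: rep222_def)
  have "subspace (X n)" "subspace (Y n)" "X n \<subseteq> Y n"
    using assms by (auto simp: rep222_def)
  then show "X n \<subseteq> Y n" "0 \<in> Y n" "uminus ` X n \<subseteq> X n" "uminus ` Y n \<subseteq> Y n"
    by (auto simp: subspace_0 subspace_neg)
qed

theorem mainTheorem4:
  fixes scale :: "'k::field \<Rightarrow> 'v::ab_group_add \<Rightarrow> 'v"
    and X0 :: "'v set" and X Y :: "nat \<Rightarrow> 'v set" and i j k :: nat
  assumes "rep222 scale X0 X Y"
    and "{i, j, k} = {1, 2, 3}"
  shows "(phi i (PhiX Y i) = {0}) \<and>
    (phi i (PhiX Y j) = Y i \<inter> Y k) \<and>
    (phi k (PhiX Y j) = Y i \<inter> Y k) \<and>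
    (phi i (PhiY X Y i) = X i \<inter> ssum (Y j) (Y k)) \<and>
    (phi i (PhiY X Y j) = Y i \<inter> ssum (X j) (Y k)) \<and>
    (phi i (PhiI Y) = Y i \<inter> ssum (Y j) (Y k)) \<and>
    (phi i (PhiY X Y j \<inter> PhiY X Y k) = Y i \<inter> ssum (X j) (X k))"
proof -
  note ijk = assms(2)
  have kji: "{k, j, i} = {1, 2, 3}" using ijk by (simp add: insert_commute)
  have "i \<in> {1, 2, 3}" "j \<in> {1, 2, 3}" "k \<in> {1, 2, 3}" using ijk by blast+
  note subspace_facts = rep222_subspace_facts[OF assms(1) this(1)]
    rep222_subspace_facts[OF assms(1) this(2)] rep222_subspace_facts[OF assms(1) this(3)]
  have "phi k (PhiX Y j) = Y i \<inter> Y k"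
    using phi_PhiX_other[OF kji] subspace_facts by (simp add: Int_commute)
  then show ?thesis
    by (intro conjI phi_PhiX_self[OF ijk] phi_PhiX_other[OF ijk] phi_PhiY_self[OF ijk]
        phi_PhiY_other[OF ijk] phi_PhiI[OF ijk] phi_PhiY_inter[OF ijk])
      (simp_all add: subspace_facts)
qed

end
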